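(* Let $\mathcal{A}$ be a finite alphabet, $\mathbf{p}=(p_0,p_1)$ an irreducible pair on $\mathcal{A}$, and $\mathbf{q}=(p_1,p_0)$. Then $\mathcal{S}(\mathbf{q})=\mathcal{S}(\mathbf{p})^{-1}$.
   Context: Let $n=\#\mathcal{A}$. A pair is $\mathbf{p}=(p_0,p_1)$ with $p_0,p_1:\mathcal{A}\to\{1,\dots,n\}$ bijections; it is irreducible if $p_0^{-1}\{1,\dots,k\}\ne p_1^{-1}\{1,\dots,k\}$ for $1\le k<n$ (so $(p_1,p_0)$ is irreducible whenever $(p_0,p_1)$ is). For irreducible $\mathbf{p}$, $\mathcal{S}(\mathbf{p}):\mathcal{A}\to\mathcal{A}$ is defined by $\mathcal{S}(\mathbf{p})(\alpha)=p_0^{-1}(1)$ if $p_1(\alpha)=1$; $=p_0^{-1}(p_0(p_1^{-1}(n))+1)$ if $p_1(\alpha)=p_1(p_0^{-1}(n))+1$; $=p_0^{-1}(p_0(p_1^{-1}(p_1(\alpha)-1))+1)$ otherwise. It is a permutation of $\mathcal{A}$. *)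

theory Defs
  imports Main
begin

definition is_pair :: "'a set \<Rightarrow> ('a \<Rightarrow> nat) \<Rightarrow> ('a \<Rightarrow> nat) \<Rightarrow> bool" where
  "is_pair A p0 p1 \<longleftrightarrow> bij_betw p0 A {1..card A} \<and> bij_betw p1 A {1..card A}"

definition irreducible_pair :: "'a set \<Rightarrow> ('a \<Rightarrow> nat) \<Rightarrow> ('a \<Rightarrow> nat) \<Rightarrow> bool" where
  "irreducible_pair A p0 p1 \<longleftrightarrow> is_pair A p0 p1 \<and>
     (\<forall>k. 1 \<le> k \<and> k < card A \<longrightarrow>
        {a \<in> A. p0 a \<in> {1..k}} \<noteq> {a \<in> A. p1 a \<in> {1..k}})"

definition S_map :: "'a set \<Rightarrow> ('a \<Rightarrow> nat) \<Rightarrow> ('a \<Rightarrow> nat) \<Rightarrow> 'a \<Rightarrow> 'a" where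
  "S_map A p0 p1 \<alpha> =
     (let n = card A; i0 = the_inv_into A p0; i1 = the_inv_into A p1 in
      if p1 \<alpha> = 1 then i0 1
      else if p1 \<alpha> = p1 (i0 n) + 1 then i0 (p0 (i1 n) + 1)
      else i0 (p0 (i1 (p1 \<alpha> - 1)) + 1))"

end

theory Submission
  imports Defs
begin

text \<open>For each of the three
  defining clauses of \<open>S(p)\<close> one computes the \<open>p\<^sub>0\<close>-position of \<open>S(p) \<alpha>\<close> and checks that the
  matching clause of \<open>S(q)\<close> leads back to \<open>\<alpha>\<close>; the symmetric identity comes from swapping the
  roles of \<open>p\<^sub>0\<close> and \<open>p\<^sub>1\<close>.\<close>

lemma is_pair_swap: "is_pair A p0 p1 \<Longrightarrow> is_pair A p1 p0"
  by (simp add: is_pair_def)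

lemma bij_betw_the_inv_into_simps:
  assumes "bij_betw f A B"
  shows "b \<in> B \<Longrightarrow> the_inv_into A f b \<in> A"
    and "b \<in> B \<Longrightarrow> f (the_inv_into A f b) = b"
    and "a \<in> A \<Longrightarrow> the_inv_into A f (f a) = a"
  using assms by (auto simp: bij_betw_def the_inv_into_into f_the_inv_into_f the_inv_into_f_f)

lemma S_map_swap_S_map_cancel:
  assumes pair: "is_pair A p0 p1" and \<alpha>: "\<alpha> \<in> A"
  shows "S_map A p0 p1 \<alpha> \<in> A \<and> S_map A p1 p0 (S_map A p0 p1 \<alpha>) = \<alpha>"
proof -
  define n where "n = card A"
  define i0 where "i0 = the_inv_into A p0"
  define i1 where "i1 = the_inv_into A p1"
  have b0: "bij_betw p0 A {1..n}" and b1: "bij_betw p1 A {1..n}"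
    using pair by (auto simp: is_pair_def n_def)
  note inv0 = bij_betw_the_inv_into_simps[OF b0, folded i0_def]
  note inv1 = bij_betw_the_inv_into_simps[OF b1, folded i1_def]
  have range0: "p0 a \<in> {1..n}" and range1: "p1 a \<in> {1..n}" if "a \<in> A" for a
    using that b0 b1 bij_betwE by blast+
  have n: "n \<ge> 1" using range1[OF \<alpha>] by simp
  have Sp: "S_map A p0 p1 \<alpha> = (if p1 \<alpha> = 1 then i0 1
      else if p1 \<alpha> = p1 (i0 n) + 1 then i0 (p0 (i1 n) + 1)
      else i0 (p0 (i1 (p1 \<alpha> - 1)) + 1))"
    by (simp add: S_map_def Let_def n_def i0_def i1_def)
  have Sq: "S_map A p1 p0 x = (if p0 x = 1 then i1 1
      else if p0 x = p0 (i1 n) + 1 then i1 (p1 (i0 n) + 1)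
      else i1 (p1 (i0 (p0 x - 1)) + 1))" for x
    by (simp add: S_map_def Let_def n_def i0_def i1_def)
  have last1: "i1 n \<in> A" "p1 (i1 n) = n" using inv1 n by auto
  consider "p1 \<alpha> = 1" | "p1 \<alpha> \<noteq> 1" "p1 \<alpha> = p1 (i0 n) + 1"
    | "p1 \<alpha> \<noteq> 1" "p1 \<alpha> \<noteq> p1 (i0 n) + 1" by blast
  then show ?thesis
  proof cases
    case 1
    have "i0 1 \<in> A" "p0 (i0 1) = 1" using inv0 n by auto
    moreover have "i1 1 = \<alpha>" using 1 inv1(3)[OF \<alpha>] by simp
    ultimately show ?thesis using 1 Sp Sq by simp
  next
    case 2
    \<comment> \<open>\<open>p\<^sub>1 (i\<^sub>0 n) < n\<close> forces \<open>i\<^sub>1 n \<noteq> i\<^sub>0 n\<close>, so \<open>p\<^sub>0 (i\<^sub>1 n) + 1\<close> is a valid position.\<close>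
    have "i1 n \<noteq> i0 n" using 2 last1 range1[OF \<alpha>] by auto
    then have "p0 (i1 n) \<noteq> n" using inv0(3)[OF last1(1)] by metis
    then have m: "p0 (i1 n) + 1 \<in> {1..n}" using range0[OF last1(1)] by auto
    have "S_map A p1 p0 (i0 (p0 (i1 n) + 1)) = i1 (p1 (i0 n) + 1)"
      using Sq inv0(2)[OF m] range0[OF last1(1)] by simp
    also have "\<dots> = \<alpha>" using 2 inv1(3)[OF \<alpha>] by simp
    finally show ?thesis using 2 Sp inv0(1)[OF m] by simp
  next
    case 3
    define \<beta> where "\<beta> = i1 (p1 \<alpha> - 1)"
    have "p1 \<alpha> - 1 \<in> {1..n}" using 3 range1[OF \<alpha>] by auto
    then have \<beta>: "\<beta> \<in> A" "p1 \<beta> = p1 \<alpha> - 1" using inv1 by (simp_all add: \<beta>_def)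
    have "\<beta> \<noteq> i0 n" using 3 \<beta> range1[OF \<alpha>] by auto
    then have "p0 \<beta> \<noteq> n" using inv0(3)[OF \<beta>(1)] by metis
    then have m: "p0 \<beta> + 1 \<in> {1..n}" using range0[OF \<beta>(1)] by auto
    have "\<beta> \<noteq> i1 n" using \<beta> last1 range1[OF \<alpha>] by auto
    then have "p0 \<beta> \<noteq> p0 (i1 n)" using inv0(3) \<beta>(1) last1(1) by metis
    then have "S_map A p1 p0 (i0 (p0 \<beta> + 1)) = i1 (p1 (i0 (p0 \<beta>)) + 1)"
      using Sq inv0(2)[OF m] range0[OF \<beta>(1)] by simp
    also have "\<dots> = \<alpha>" using 3 \<beta> inv0(3)[OF \<beta>(1)] inv1(3)[OF \<alpha>] range1[OF \<alpha>] by simp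
    finally show ?thesis using 3 Sp inv0(1)[OF m] by (simp add: \<beta>_def)
  qed
qed

lemma S_map_bij_betw_and_swap_inverse:
  assumes pair: "is_pair A p0 p1"
  shows "bij_betw (S_map A p0 p1) A A"
    and "\<alpha> \<in> A \<Longrightarrow> S_map A p1 p0 \<alpha> = the_inv_into A (S_map A p0 p1) \<alpha>"
proof -
  note left = S_map_swap_S_map_cancel[OF pair]
    and right = S_map_swap_S_map_cancel[OF is_pair_swap[OF pair]]
  show bij: "bij_betw (S_map A p0 p1) A A"
    by (rule bij_betw_byWitness[where f' = "S_map A p1 p0"]) (use left right in auto)
  assume "\<alpha> \<in> A"
  then have mem: "S_map A p1 p0 \<alpha> \<in> A" and cancel: "S_map A p0 p1 (S_map A p1 p0 \<alpha>) = \<alpha>"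
    using right by blast+
  have "the_inv_into A (S_map A p0 p1) (S_map A p0 p1 (S_map A p1 p0 \<alpha>)) = S_map A p1 p0 \<alpha>"
    using bij_betw_the_inv_into_simps(3)[OF bij mem] .
  then show "S_map A p1 p0 \<alpha> = the_inv_into A (S_map A p0 p1) \<alpha>" by (simp only: cancel)
qed

theorem lemma2p9:
  fixes A :: "'a set" and p0 p1 :: "'a \<Rightarrow> nat"
  assumes "finite A"
    and "irreducible_pair A p0 p1"
  shows "bij_betw (S_map A p0 p1) A A \<and>
         (\<forall>\<alpha>\<in>A. S_map A p1 p0 \<alpha> = the_inv_into A (S_map A p0 p1) \<alpha>)"
proof -
  have "is_pair A p0 p1" using assms(2) by (simp add: irreducible_pair_def)
  from S_map_bij_betw_and_swap_inverse[OF this] show ?thesis by blast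
qed

end
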